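(* Under the assumptions of the explicit-formulae proposition (piecewise linear concave non-positive increasing $v$ on grid $x_1<\dots<x_N$, $-\infty$ below $x_1$ and constant above $x_N$; $u$ concave increasing with $u^\dagger$ continuous on $(0,\infty)$ and $\lim_{p\to0}u^\dagger(p)=\infty$; $s\in(0,1)$), $\lim_{\eta\to0}X^\eta=\infty$.
   Context: $\Phi$ is the standard normal distribution function, $M=|\mu-r|\sqrt{\delta t}/\sigma$, $Q(x)=\Phi(M+\Phi^{-1}(x))$, $q^A_{BS}=Q'$. For concave increasing $g$, $g^\dagger(p)=\inf\{x:p\in\partial g(x)\}$, $\partial g$ the superdifferential. $C\in\{0,1\}$. For $\eta>0$: $f^\eta(x)=v^\dagger(\eta s^{C-1}e^{-r\delta t}q^A_{BS}(x))$, $\gamma^\eta=u^\dagger\big(-\frac{\eta}{\delta t}\big(-1+s\int_0^1(1+v(f^\eta(x)))\mathrm dx\big)^{-1}\big)$, $X^\eta=\gamma^\eta+s^C\int_0^1e^{-r\delta t}q^A_{BS}(x)f^\eta(x)\mathrm dx$. *)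

theory Defs
  imports "HOL-Probability.Probability"
begin

definition Phi :: "real \<Rightarrow> real" where
  "Phi x = (LINT t:{..x}|lborel. std_normal_density t)"

definition Phi_inv :: "real \<Rightarrow> real" where
  "Phi_inv p = (THE x. Phi x = p)"

definition QBS :: "real \<Rightarrow> real \<Rightarrow> real" where
  "QBS M x = Phi (M + Phi_inv x)"

definition qBS :: "real \<Rightarrow> real \<Rightarrow> real" where
  "qBS M x = deriv (QBS M) x"

text \<open>Superdifferential of a concave function with effective domain D
  (the function is -infinity outside D), and the generalised inverse g^dagger.\<close>
definition superdiff_on :: "real set \<Rightarrow> (real \<Rightarrow> real) \<Rightarrow> real \<Rightarrow> real set" where
  "superdiff_on D g x = {p. \<forall>y\<in>D. g y \<le> g x + p * (y - x)}"

definition dagger_on :: "real set \<Rightarrow> (real \<Rightarrow> real) \<Rightarrow> real \<Rightarrow> real" where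
  "dagger_on D g p = Inf {x\<in>D. p \<in> superdiff_on D g x}"

definition f_eta :: "(real \<Rightarrow> real) \<Rightarrow> real \<Rightarrow> real \<Rightarrow> nat \<Rightarrow> real \<Rightarrow> real \<Rightarrow> real \<Rightarrow> real \<Rightarrow> real \<Rightarrow> real" where
  "f_eta v x1 s C r dt M \<eta> x =
     dagger_on {x1..} v (\<eta> * s powr (real C - 1) * exp (- r * dt) * qBS M x)"

definition gamma_eta :: "(real \<Rightarrow> real) \<Rightarrow> (real \<Rightarrow> real) \<Rightarrow> real \<Rightarrow> real \<Rightarrow> nat \<Rightarrow> real \<Rightarrow> real \<Rightarrow> real \<Rightarrow> real \<Rightarrow> real" where
  "gamma_eta u v x1 s C r dt M \<eta> =
     dagger_on UNIV u (- (\<eta> / dt) *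
        inverse (-1 + s * (LBINT x=0..1. 1 + v (f_eta v x1 s C r dt M \<eta> x))))"

definition X_eta :: "(real \<Rightarrow> real) \<Rightarrow> (real \<Rightarrow> real) \<Rightarrow> real \<Rightarrow> real \<Rightarrow> nat \<Rightarrow> real \<Rightarrow> real \<Rightarrow> real \<Rightarrow> real \<Rightarrow> real" where
  "X_eta u v x1 s C r dt M \<eta> =
     gamma_eta u v x1 s C r dt M \<eta>
     + s ^ C * (LBINT x=0..1. exp (- r * dt) * qBS M x * f_eta v x1 s C r dt M \<eta> x)"

end

theory Submission
  imports Defs
begin

(* Since v <= 0 and f^eta >= x_1, the denominator -1 + s * int_0^1 (1 + v(f^eta)) in gamma^eta
   is at most s - 1 < 0, so the argument of u^dagger lies in (0, eta / (dt (1 - s))] and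
   gamma^eta tends to infinity as eta -> 0. The second summand of X^eta stays bounded below by
   s^C e^(-r dt) min(0, x_1) int_0^1 q, which is finite because q = Q' and Q increases from 0
   to 1 on (0, 1). *)

section \<open>The standard normal distribution function\<close>

lemma Phi_eq_integral: "Phi x = (\<integral>t. indicator {..x} t * std_normal_density t \<partial>lborel)"
  unfolding Phi_def set_lebesgue_integral_def by simp

lemma Phi_le_1: "Phi x \<le> 1"
proof -
  have "Phi x \<le> (\<integral>t. std_normal_density t \<partial>lborel)"
    unfolding Phi_eq_integral
    by (rule integral_mono) (auto split: split_indicator
        intro: integrable_mult_indicator[of "{..x}" lborel std_normal_density, simplified])
  then show ?thesis by simp
qed

lemma Phi_nonneg: "0 \<le> Phi x"
  unfolding Phi_eq_integral by (rule integral_nonneg_AE) (auto split: split_indicator)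

lemma tendsto_Phi_at_top: "(Phi \<longlongrightarrow> 1) at_top"
proof (rule tendsto_at_topI_sequentially)
  fix X :: "nat \<Rightarrow> real" assume X: "filterlim X at_top sequentially"
  have "(\<lambda>n. \<integral>t. indicator {..X n} t * std_normal_density t \<partial>lborel)
          \<longlonglongrightarrow> (\<integral>t. std_normal_density t \<partial>lborel)"
  proof (rule integral_dominated_convergence[where w = std_normal_density])
    show "AE t in lborel. (\<lambda>n. indicator {..X n} t * std_normal_density t)
            \<longlonglongrightarrow> std_normal_density t"
    proof
      fix t
      have "eventually (\<lambda>n. t \<le> X n) sequentially"
        using X unfolding filterlim_at_top by auto
      then show "(\<lambda>n. indicator {..X n} t * std_normal_density t) \<longlonglongrightarrow> std_normal_density t"
        by (intro tendsto_eventually) (auto elim!: eventually_mono split: split_indicator)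
    qed
  qed (auto split: split_indicator)
  then show "(\<lambda>n. Phi (X n)) \<longlonglongrightarrow> 1" by (simp add: Phi_eq_integral)
qed

lemma tendsto_Phi_at_bot: "(Phi \<longlongrightarrow> 0) at_bot"
proof (rule tendsto_at_botI_sequentially)
  fix X :: "nat \<Rightarrow> real" assume X: "filterlim X at_bot sequentially"
  have "(\<lambda>n. \<integral>t. indicator {..X n} t * std_normal_density t \<partial>lborel)
          \<longlonglongrightarrow> integral\<^sup>L lborel (\<lambda>t::real. 0::real)"
  proof (rule integral_dominated_convergence[where w = std_normal_density and f = "\<lambda>_. 0"])
    show "AE t in lborel. (\<lambda>n. indicator {..X n} t * std_normal_density t) \<longlonglongrightarrow> 0"
    proof
      fix t
      have "eventually (\<lambda>n. X n < t) sequentially"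
        using X unfolding filterlim_at_bot_dense by auto
      then show "(\<lambda>n. indicator {..X n} t * std_normal_density t) \<longlonglongrightarrow> 0"
        by (intro tendsto_eventually) (auto elim!: eventually_mono split: split_indicator)
    qed
  qed (auto split: split_indicator)
  then show "(\<lambda>n. Phi (X n)) \<longlonglongrightarrow> 0" by (simp add: Phi_eq_integral)
qed

lemma Phi_eq_Phi_0_add_interval_integral:
  "Phi x = Phi 0 + (LBINT t=0..x. std_normal_density t)"
proof -
  have split: "Phi b = Phi a + (LINT t:{a<..b}|lborel. std_normal_density t)" if "a \<le> b" for a b
  proof -
    have "Phi b = (LINT t:{..a} \<union> {a<..b}|lborel. std_normal_density t)"
      unfolding Phi_def using that by (intro arg_cong[where f = "\<lambda>A. set_lebesgue_integral lborel A _"]) auto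
    also have "\<dots> = Phi a + (LINT t:{a<..b}|lborel. std_normal_density t)"
      unfolding Phi_def
      using integrable_mult_indicator[of "{..a}" lborel std_normal_density]
        integrable_mult_indicator[of "{a<..b}" lborel std_normal_density]
      by (intro set_integral_Un) (auto simp: set_integrable_def)
    finally show ?thesis .
  qed
  show ?thesis
  proof (cases "0 \<le> x")
    case True
    then show ?thesis
      using split[OF True] interval_integral_Ioc[of 0 x std_normal_density] by (simp add: zero_ereal_def)
  next
    case False
    then show ?thesis
      using split[of x 0] interval_integral_Ioc[of x 0 std_normal_density]
        interval_integral_endpoints_reverse[of 0 x std_normal_density]
      by (simp add: zero_ereal_def)
  qed
qed

lemma isCont_std_normal_density: "isCont std_normal_density x"
  unfolding normal_density_def by (intro continuous_intros) auto

lemma Phi_has_real_derivative: "(Phi has_real_derivative std_normal_density x) (at x)"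
proof -
  define a where "a = min 0 x - 1"
  define b where "b = max 0 x + 1"
  have "((\<lambda>y. LBINT t=ereal 0..y. std_normal_density t) has_vector_derivative std_normal_density x)
          (at x within {a..b})"
    by (rule interval_integral_FTC2)
       (auto simp: a_def b_def intro!: continuous_at_imp_continuous_on isCont_std_normal_density)
  then have "((\<lambda>y. LBINT t=0..y. std_normal_density t) has_real_derivative std_normal_density x) (at x)"
    using at_within_Icc_at[of a x b]
    by (simp add: has_real_derivative_iff_has_vector_derivative a_def b_def zero_ereal_def)
  then have "((\<lambda>y. Phi 0 + (LBINT t=0..y. std_normal_density t))
               has_real_derivative std_normal_density x) (at x)"
    by (auto intro!: derivative_eq_intros)
  then show ?thesis
    by (simp flip: Phi_eq_Phi_0_add_interval_integral)
qed

lemma isCont_Phi: "isCont Phi x"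
  using Phi_has_real_derivative DERIV_isCont by blast

lemma Phi_strict_mono: "strict_mono Phi"
proof (rule strict_monoI)
  fix a b :: real assume "a < b"
  then show "Phi a < Phi b"
    by (rule DERIV_pos_imp_increasing) (auto intro!: Phi_has_real_derivative normal_density_pos)
qed

lemma Phi_pos: "0 < Phi x"
  using strict_monoD[OF Phi_strict_mono, of "x - 1" x] Phi_nonneg[of "x - 1"] by simp

lemma Phi_less_1: "Phi x < 1"
  using strict_monoD[OF Phi_strict_mono, of x "x + 1"] Phi_le_1[of "x + 1"] by simp

lemma Phi_surj: "\<exists>x. Phi x = p" if "0 < p" "p < 1"
proof -
  obtain a where a: "Phi a < p"
    using order_tendstoD(2)[OF tendsto_Phi_at_bot \<open>0 < p\<close>] by (auto simp: eventually_at_bot_linorder)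
  obtain b where b: "p < Phi b"
    using order_tendstoD(1)[OF tendsto_Phi_at_top \<open>p < 1\<close>] by (auto simp: eventually_at_top_linorder)
  have "a \<le> b"
    using a b strict_mono_less_eq[OF Phi_strict_mono, of b a] by linarith
  moreover have "continuous_on {a..b} Phi"
    using isCont_Phi by (simp add: continuous_at_imp_continuous_on)
  ultimately show ?thesis
    using IVT'[of Phi a p b] a b by auto
qed

lemma Phi_inv_eq: "Phi x = p \<Longrightarrow> Phi_inv p = x"
  unfolding Phi_inv_def by (rule the_equality) (auto simp: strict_mono_eq[OF Phi_strict_mono])

lemma Phi_Phi_inv: "0 < p \<Longrightarrow> p < 1 \<Longrightarrow> Phi (Phi_inv p) = p"
  using Phi_surj Phi_inv_eq by blast

lemma Phi_inv_Phi: "Phi_inv (Phi x) = x"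
  by (rule Phi_inv_eq) (rule refl)

lemma isCont_Phi_inv: "0 < p \<Longrightarrow> p < 1 \<Longrightarrow> isCont Phi_inv p"
  using isCont_inverse_function[of 1 "Phi_inv p" Phi_inv Phi] Phi_inv_Phi isCont_Phi Phi_Phi_inv
  by simp

lemma Phi_inv_has_real_derivative:
  assumes "0 < p" "p < 1"
  shows "(Phi_inv has_real_derivative inverse (std_normal_density (Phi_inv p))) (at p)"
  by (rule DERIV_inverse_function[of Phi _ _ _ 0 1])
     (use assms normal_density_pos[of 1 0 "Phi_inv p"] in
       \<open>auto intro: Phi_has_real_derivative Phi_Phi_inv isCont_Phi_inv\<close>)

lemma filterlim_Phi_inv_at_bot: "filterlim Phi_inv at_bot (at_right 0)"
  unfolding filterlim_at_bot
proof
  fix z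
  have "eventually (\<lambda>p. p \<in> {0<..<Phi z}) (at_right 0)"
    by (rule eventually_at_right_real) (rule Phi_pos)
  then show "eventually (\<lambda>p. Phi_inv p \<le> z) (at_right 0)"
  proof (rule eventually_mono)
    fix p assume "p \<in> {0<..<Phi z}"
    then have "Phi (Phi_inv p) < Phi z"
      using Phi_less_1[of z] Phi_Phi_inv by simp
    then show "Phi_inv p \<le> z" using strict_mono_less[OF Phi_strict_mono] by simp
  qed
qed

lemma filterlim_Phi_inv_at_top: "filterlim Phi_inv at_top (at_left 1)"
  unfolding filterlim_at_top
proof
  fix z
  have "eventually (\<lambda>p. p \<in> {Phi z<..<1}) (at_left 1)"
    by (rule eventually_at_left_real) (rule Phi_less_1)
  then show "eventually (\<lambda>p. z \<le> Phi_inv p) (at_left 1)"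
  proof (rule eventually_mono)
    fix p assume "p \<in> {Phi z<..<1}"
    then have "Phi z < Phi (Phi_inv p)"
      using Phi_pos[of z] Phi_Phi_inv by simp
    then show "z \<le> Phi_inv p" using strict_mono_less[OF Phi_strict_mono] by simp
  qed
qed

section \<open>The density q = Q'\<close>

definition qBS_formula :: "real \<Rightarrow> real \<Rightarrow> real" where
  "qBS_formula M x = std_normal_density (M + Phi_inv x) / std_normal_density (Phi_inv x)"

lemma qBS_formula_pos: "0 < qBS_formula M x"
  unfolding qBS_formula_def by (simp add: normal_density_pos)

lemma QBS_has_real_derivative:
  assumes "0 < x" "x < 1"
  shows "(QBS M has_real_derivative qBS_formula M x) (at x)"
proof -
  have "((\<lambda>x. M + Phi_inv x) has_real_derivative inverse (std_normal_density (Phi_inv x))) (at x)"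
    using Phi_inv_has_real_derivative[OF assms] by (auto intro!: derivative_eq_intros)
  from DERIV_chain2[OF Phi_has_real_derivative this] show ?thesis
    unfolding qBS_formula_def by (simp add: QBS_def[abs_def] divide_inverse)
qed

lemma qBS_eq_formula: "0 < x \<Longrightarrow> x < 1 \<Longrightarrow> qBS M x = qBS_formula M x"
  unfolding qBS_def using QBS_has_real_derivative DERIV_imp_deriv by blast

lemma isCont_qBS_formula: "0 < x \<Longrightarrow> x < 1 \<Longrightarrow> isCont (qBS_formula M) x"
  unfolding qBS_formula_def
  by (intro continuous_intros isCont_o2[OF _ isCont_std_normal_density] isCont_Phi_inv)
     (auto simp: normal_density_pos less_imp_neq[symmetric])

lemma set_integrable_qBS: "set_integrable lborel {0<..<1} (qBS M)"
proof -
  have Q0: "(QBS M \<longlongrightarrow> 0) (at_right 0)"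
    unfolding QBS_def[abs_def]
    using filterlim_compose[OF tendsto_Phi_at_bot filterlim_tendsto_add_at_bot_iff[OF tendsto_const, THEN iffD2, OF filterlim_Phi_inv_at_bot]]
    by (simp add: comp_def)
  have Q1: "(QBS M \<longlongrightarrow> 1) (at_left 1)"
    unfolding QBS_def[abs_def]
    using filterlim_compose[OF tendsto_Phi_at_top filterlim_tendsto_add_at_top[OF tendsto_const filterlim_Phi_inv_at_top]]
    by (simp add: comp_def)
  have "set_integrable lborel (einterval (ereal 0) (ereal 1)) (qBS_formula M)"
  proof (rule interval_integral_FTC_nonneg)
    show "((QBS M \<circ> real_of_ereal) \<longlongrightarrow> 0) (at_right (ereal 0))"
      unfolding at_right_ereal tendsto_compose_filtermap[symmetric] using Q0 by (simp add: comp_def)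
    show "((QBS M \<circ> real_of_ereal) \<longlongrightarrow> 1) (at_left (ereal 1))"
      unfolding at_left_ereal tendsto_compose_filtermap[symmetric] using Q1 by (simp add: comp_def)
  qed (auto intro: QBS_has_real_derivative isCont_qBS_formula less_imp_le[OF qBS_formula_pos])
  then show ?thesis
    by (subst set_integrable_cong[OF refl refl qBS_eq_formula]) auto
qed

section \<open>Superdifferentials and continuity\<close>

lemma superdiff_on_nonempty:
  fixes v :: "real \<Rightarrow> real"
  assumes "a \<le> b" and cont: "continuous_on {a..b} v" and const: "\<forall>y\<ge>b. v y = v b"
    and "0 \<le> p"
  shows "\<exists>z\<in>{a..b}. p \<in> superdiff_on {a..} v z"
proof -
  \<comment> \<open>a maximiser of \<open>v y - p * y\<close> on \<open>[a, b]\<close> is one on \<open>[a, \<infinity>)\<close>, since \<open>v\<close> is constant beyond \<open>b\<close>\<close>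
  have "continuous_on {a..b} (\<lambda>y. v y - p * y)"
    by (intro continuous_intros cont)
  then obtain z where z: "z \<in> {a..b}" and max: "\<forall>y\<in>{a..b}. v y - p * y \<le> v z - p * z"
    using continuous_attains_sup[of "{a..b}" "\<lambda>y. v y - p * y"] \<open>a \<le> b\<close> by auto
  have "v y \<le> v z + p * (y - z)" if "a \<le> y" for y
  proof (cases "y \<le> b")
    case True
    then have "v y - p * y \<le> v z - p * z" using max that by auto
    then show ?thesis by (simp add: right_diff_distrib)
  next
    case False
    have "v b - p * b \<le> v z - p * z" using max \<open>a \<le> b\<close> by simp
    moreover have "p * b \<le> p * y" using False \<open>0 \<le> p\<close> by (intro mult_left_mono) auto
    moreover have "v y = v b" using const[rule_format, of y] False by linarith
    ultimately show ?thesis by (simp add: right_diff_distrib)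
  qed
  then show ?thesis using z unfolding superdiff_on_def by blast
qed

lemma dagger_on_ge:
  assumes "D \<subseteq> {a..}" and "\<exists>z\<in>D. p \<in> superdiff_on D g z"
  shows "a \<le> dagger_on D g p"
  unfolding dagger_on_def using assms by (intro cInf_greatest) auto

lemma concave_on_continuous_on_atLeast:
  fixes v :: "real \<Rightarrow> real"
  assumes "a < c" and concave: "concave_on {a..} v"
    and affine: "\<forall>x\<in>{a..c}. v x = v a + k * (x - a)"
  shows "continuous_on {a..} v"
proof -
  define m where "m = (a + c) / 2"
  have "continuous_on {a..c} (\<lambda>x. v a + k * (x - a))"
    by (intro continuous_intros)
  then have left: "continuous_on {a..c} v"
    by (rule continuous_on_cong[THEN iffD1, OF refl, rotated]) (use affine in \<open>metis\<close>)
  have "convex_on {a<..} (\<lambda>x. - v x)"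
    using concave unfolding concave_on_def by (rule convex_on_subset) auto
  then have "continuous_on {a<..} (\<lambda>x. - (- v x))"
    by (intro continuous_on_minus convex_on_continuous) auto
  then have "continuous_on {a<..} v" by simp
  then have right: "continuous_on {m..} v"
    by (rule continuous_on_subset) (use \<open>a < c\<close> in \<open>auto simp: m_def\<close>)
  have "continuous_on ({a..c} \<union> {m..}) v"
    by (rule continuous_on_closed_Un[OF _ _ left right]) auto
  moreover have "{a..c} \<union> {m..} = {a..}"
    using \<open>a < c\<close> by (auto simp: m_def)
  ultimately show ?thesis by simp
qed

lemma piecewise_linear_continuous_on:
  fixes v :: "real \<Rightarrow> real" and xs :: "nat \<Rightarrow> real"
  assumes "N \<ge> 1"
    and grid: "\<forall>i\<in>{1..<N}. xs i < xs (Suc i)"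
    and v_lin: "\<forall>i\<in>{1..<N}. \<forall>x\<in>{xs i..xs (Suc i)}.
                 v x = v (xs i) + (v (xs (Suc i)) - v (xs i)) / (xs (Suc i) - xs i) * (x - xs i)"
    and v_const: "\<forall>x\<ge>xs N. v x = v (xs N)"
    and concave: "concave_on {xs 1..} v"
  shows "continuous_on {xs 1..} v"
proof (cases "N = 1")
  case True
  then have "continuous_on {xs 1..} (\<lambda>_. v (xs N))"
    by (intro continuous_intros)
  then show ?thesis
    by (rule continuous_on_cong[THEN iffD1, OF refl, rotated]) (use v_const True in \<open>metis atLeast_iff\<close>)
next
  case False
  then have one: "1 \<in> {1..<N}" using \<open>N \<ge> 1\<close> by simp
  show ?thesis
    by (rule concave_on_continuous_on_atLeast[OF _ concave bspec[OF v_lin one]]) (use grid one in blast)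
qed

(* The maximum and minimum with 0 cover a non-integrable g, whose integral is 0. *)
lemma interval_integral_le_max_0:
  fixes g h :: "real \<Rightarrow> real"
  assumes "a \<le> b" and h: "set_integrable lborel {a<..<b} h"
    and le: "\<And>x. x \<in> {a<..<b} \<Longrightarrow> g x \<le> h x"
  shows "(LBINT x=ereal a..ereal b. g x) \<le> max 0 (LBINT x=ereal a..ereal b. h x)"
proof (cases "set_integrable lborel {a<..<b} g")
  case True
  then show ?thesis
    using set_integral_mono[OF True h le] \<open>a \<le> b\<close> by (simp add: interval_lebesgue_integral_def)
next
  case False
  then show ?thesis
    using \<open>a \<le> b\<close>
    by (simp add: interval_lebesgue_integral_def set_lebesgue_integral_def set_integrable_def
        not_integrable_integral_eq)
qed

lemma interval_integral_ge_min_0: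
  fixes g h :: "real \<Rightarrow> real"
  assumes "a \<le> b" and h: "set_integrable lborel {a<..<b} h"
    and le: "\<And>x. x \<in> {a<..<b} \<Longrightarrow> h x \<le> g x"
  shows "min 0 (LBINT x=ereal a..ereal b. h x) \<le> (LBINT x=ereal a..ereal b. g x)"
proof (cases "set_integrable lborel {a<..<b} g")
  case True
  then show ?thesis
    using set_integral_mono[OF h True le] \<open>a \<le> b\<close> by (simp add: interval_lebesgue_integral_def)
next
  case False
  then show ?thesis
    using \<open>a \<le> b\<close>
    by (simp add: interval_lebesgue_integral_def set_lebesgue_integral_def set_integrable_def
        not_integrable_integral_eq)
qed

section \<open>The limit as eta tends to 0\<close>

lemma f_eta_ge:
  fixes v :: "real \<Rightarrow> real"
  assumes cont: "continuous_on {a..} v" and const: "\<forall>y\<ge>b. v y = v b" and "a \<le> b"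
    and "0 < \<eta>" "0 < s" "x \<in> {0<..<1}"
  shows "a \<le> f_eta v a s C r dt M \<eta> x"
proof -
  have "0 < qBS M x"
    using qBS_eq_formula qBS_formula_pos \<open>x \<in> {0<..<1}\<close> by simp
  then have "0 \<le> \<eta> * s powr (real C - 1) * exp (- r * dt) * qBS M x"
    using \<open>0 < \<eta>\<close> \<open>0 < s\<close> by simp
  moreover have "continuous_on {a..b} v"
    using cont by (rule continuous_on_subset) auto
  ultimately have "\<exists>z\<in>{a..b}. \<eta> * s powr (real C - 1) * exp (- r * dt) * qBS M x
                      \<in> superdiff_on {a..} v z"
    using superdiff_on_nonempty[OF \<open>a \<le> b\<close> _ const] by blast
  then show ?thesis
    unfolding f_eta_def by (intro dagger_on_ge[OF order_refl]) auto
qed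

lemma filterlim_gamma_argument:
  fixes I :: "real \<Rightarrow> real"
  assumes I: "\<forall>\<eta>>0. I \<eta> \<le> 1" and "0 < s" "s < 1" "0 < dt"
  shows "filterlim (\<lambda>\<eta>. - (\<eta> / dt) * inverse (-1 + s * I \<eta>)) (at_right 0) (at_right 0)"
proof -
  define A where "A = (\<lambda>\<eta>. - (\<eta> / dt) * inverse (-1 + s * I \<eta>))"
  have A: "0 < A \<eta> \<and> A \<eta> \<le> \<eta> / (dt * (1 - s))" if "0 < \<eta>" for \<eta>
  proof -
    have "s * I \<eta> \<le> s" using I \<open>0 < s\<close> that by (simp add: mult_left_le)
    then have w: "1 - s \<le> 1 - s * I \<eta>" by simp
    have "-1 + s * I \<eta> = - (1 - s * I \<eta>)" by simp
    then have "A \<eta> = (\<eta> / dt) / (1 - s * I \<eta>)"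
      unfolding A_def by (simp only: inverse_minus_eq divide_inverse) simp
    moreover have "(\<eta> / dt) / (1 - s * I \<eta>) \<le> (\<eta> / dt) / (1 - s)"
      using w \<open>s < 1\<close> \<open>0 < dt\<close> that by (intro divide_left_mono) auto
    ultimately show ?thesis
      using w \<open>s < 1\<close> \<open>0 < dt\<close> that by simp
  qed
  have pos: "eventually (\<lambda>\<eta>::real. 0 < \<eta>) (at_right 0)"
    by (simp add: eventually_at_right_less)
  have bound: "((\<lambda>\<eta>. \<eta> / (dt * (1 - s))) \<longlongrightarrow> 0) (at_right 0)"
    by (rule tendsto_eq_intros) (use \<open>s < 1\<close> \<open>0 < dt\<close> in \<open>auto intro!: tendsto_intros\<close>)
  have "(A \<longlongrightarrow> 0) (at_right 0)"
    by (rule tendsto_sandwich[OF _ _ tendsto_const bound])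
       (use pos in \<open>auto elim!: eventually_mono dest: A intro: less_imp_le\<close>)
  moreover have "eventually (\<lambda>\<eta>. A \<eta> \<in> {0<..} \<and> A \<eta> \<noteq> 0) (at_right 0)"
    using pos by (auto elim!: eventually_mono dest: A)
  ultimately show ?thesis
    unfolding A_def[symmetric] filterlim_at by blast
qed

lemma gamma_eta_tendsto_at_top:
  fixes u v :: "real \<Rightarrow> real"
  assumes u_dag_lim: "filterlim (dagger_on UNIV u) at_top (at_right 0)"
    and v_nonpos: "\<forall>x\<ge>a. v x \<le> 0"
    and f_ge: "\<forall>\<eta>>0. \<forall>x\<in>{0<..<1}. a \<le> f_eta v a s C r dt M \<eta> x"
    and "0 < s" "s < 1" "0 < dt"
  shows "filterlim (gamma_eta u v a s C r dt M) at_top (at_right 0)"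
proof -
  have "(LBINT x=0..1. 1 + v (f_eta v a s C r dt M \<eta> x)) \<le> 1" if "0 < \<eta>" for \<eta>
  proof -
    have "(LBINT x=ereal 0..ereal 1. 1 + v (f_eta v a s C r dt M \<eta> x))
            \<le> max 0 (LBINT x=ereal 0..ereal 1. 1)"
      by (rule interval_integral_le_max_0)
         (use f_ge v_nonpos that in \<open>auto simp: set_integrable_def\<close>)
    then show ?thesis
      by (simp add: zero_ereal_def one_ereal_def)
  qed
  then have "filterlim (\<lambda>\<eta>. - (\<eta> / dt) *
               inverse (-1 + s * (LBINT x=0..1. 1 + v (f_eta v a s C r dt M \<eta> x))))
               (at_right 0) (at_right 0)"
    using \<open>0 < s\<close> \<open>s < 1\<close> \<open>0 < dt\<close> by (intro filterlim_gamma_argument) auto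
  from filterlim_compose[OF u_dag_lim this] show ?thesis
    unfolding gamma_eta_def[abs_def] by simp
qed

lemma integral_qBS_f_eta_bounded_below:
  assumes f_ge: "\<forall>\<eta>>0. \<forall>x\<in>{0<..<1}. a \<le> f_eta v a s C r dt M \<eta> x"
  shows "\<exists>K. \<forall>\<eta>>0. K \<le> (LBINT x=0..1. exp (- r * dt) * qBS M x * f_eta v a s C r dt M \<eta> x)"
proof (intro exI allI impI)
  fix \<eta> :: real assume "0 < \<eta>"
  define h where "h x = exp (- r * dt) * min 0 a * qBS M x" for x
  have "set_integrable lborel {0<..<1} h"
    unfolding h_def using set_integrable_qBS by (intro set_integrable_mult_right)
  then have "min 0 (LBINT x=ereal 0..ereal 1. h x)
               \<le> (LBINT x=ereal 0..ereal 1. exp (- r * dt) * qBS M x * f_eta v a s C r dt M \<eta> x)"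
  proof (rule interval_integral_ge_min_0[OF zero_le_one])
    fix x :: real assume x: "x \<in> {0<..<1}"
    have "0 \<le> exp (- r * dt) * qBS M x"
      using x qBS_eq_formula qBS_formula_pos[of M x] by simp
    moreover have "a \<le> f_eta v a s C r dt M \<eta> x"
      using f_ge \<open>0 < \<eta>\<close> x by blast
    then have "min 0 a \<le> f_eta v a s C r dt M \<eta> x"
      by (simp add: min_le_iff_disj)
    ultimately have "(exp (- r * dt) * qBS M x) * min 0 a
                       \<le> (exp (- r * dt) * qBS M x) * f_eta v a s C r dt M \<eta> x"
      by (intro mult_left_mono)
    then show "h x \<le> exp (- r * dt) * qBS M x * f_eta v a s C r dt M \<eta> x"
      by (simp only: h_def ac_simps)
  qed
  then show "min 0 (LBINT x=0..1. h x)
               \<le> (LBINT x=0..1. exp (- r * dt) * qBS M x * f_eta v a s C r dt M \<eta> x)"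
    by (simp add: zero_ereal_def one_ereal_def)
qed

theorem mainTheorem9:
  fixes u v :: "real \<Rightarrow> real" and xs :: "nat \<Rightarrow> real" and N C :: nat
    and s r mu sigma dt :: real
  assumes N: "N \<ge> 1"
    and grid: "\<forall>i\<in>{1..<N}. xs i < xs (Suc i)"
    and v_lin: "\<forall>i\<in>{1..<N}. \<forall>x\<in>{xs i..xs (Suc i)}.
                 v x = v (xs i) + (v (xs (Suc i)) - v (xs i)) / (xs (Suc i) - xs i) * (x - xs i)"
    and v_const: "\<forall>x\<ge>xs N. v x = v (xs N)"
    and v_concave: "concave_on {xs 1..} v"
    and v_nonpos: "\<forall>x\<ge>xs 1. v x \<le> 0"
    and v_mono: "mono_on {xs 1..} v"
    and u_concave: "concave_on UNIV u"
    and u_mono: "mono u"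
    and u_dag_cont: "continuous_on {0<..} (dagger_on UNIV u)"
    and u_dag_lim: "filterlim (dagger_on UNIV u) at_top (at_right 0)"
    and s: "0 < s" "s < 1"
    and C: "C \<in> {0, 1}"
    and sigma: "sigma > 0" and dt: "dt > 0"
  shows "filterlim
           (\<lambda>\<eta>. X_eta u v (xs 1) s C r dt (\<bar>mu - r\<bar> * sqrt dt / sigma) \<eta>)
           at_top (at_right 0)"
proof -
  define M where "M = \<bar>mu - r\<bar> * sqrt dt / sigma"
  have "xs 1 \<le> xs N"
    using lift_Suc_mono_le_ivl[of "{1..<N}" xs 1 N] grid N by force
  moreover have "continuous_on {xs 1..} v"
    using N grid v_lin v_const v_concave by (rule piecewise_linear_continuous_on)
  ultimately have f_ge: "\<forall>\<eta>>0. \<forall>x\<in>{0<..<1}. xs 1 \<le> f_eta v (xs 1) s C r dt M \<eta> x"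
    using v_const s by (blast intro: f_eta_ge)
  have gamma: "filterlim (gamma_eta u v (xs 1) s C r dt M) at_top (at_right 0)"
    using u_dag_lim v_nonpos f_ge s dt by (rule gamma_eta_tendsto_at_top)
  obtain K where K: "\<forall>\<eta>>0. K \<le> (LBINT x=0..1. exp (- r * dt) * qBS M x * f_eta v (xs 1) s C r dt M \<eta> x)"
    using integral_qBS_f_eta_bounded_below[OF f_ge] by blast
  have "eventually (\<lambda>\<eta>. s ^ C * K + gamma_eta u v (xs 1) s C r dt M \<eta>
                          \<le> X_eta u v (xs 1) s C r dt M \<eta>) (at_right 0)"
    using eventually_at_right_less[of 0]
  proof (rule eventually_mono)
    fix \<eta> :: real assume "0 < \<eta>"
    then show "s ^ C * K + gamma_eta u v (xs 1) s C r dt M \<eta> \<le> X_eta u v (xs 1) s C r dt M \<eta>"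
      unfolding X_eta_def using K s by (simp add: mult_left_mono)
  qed
  from filterlim_at_top_mono[OF filterlim_tendsto_add_at_top[OF tendsto_const gamma] this]
  show ?thesis unfolding M_def .
qed

end
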